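(* For every even $N\ge2$, the eigenvalue $r_{1,N}(z)$ has a pole of order $2N$ at $z=1$ and the eigenvalue $r_{2,N}(z)$ has a zero of order $2N$ at $z=1$.
   Context: Fix $0<\alpha,\beta<1$. For $\varepsilon\in(0,1)$: $\phi_{\varepsilon,1}(z)=\begin{pmatrix}1&\varepsilon^2z^{-1}\\ \varepsilon^{-2}&1\end{pmatrix}$, $\phi_{\varepsilon,2}(z)=\frac{1}{1-z^{-1}}\phi_{\varepsilon,1}(z)$, $\phi_3(z)=\begin{pmatrix}1&z^{-1}\\1&1\end{pmatrix}$, $\phi_4(z)=\frac{1}{1-z^{-1}}\phi_3(z)$, $\Phi_\varepsilon=\phi_{\varepsilon,1}\phi_{\varepsilon,2}\phi_3\phi_4$. Let $\phi_N(z)=\Phi_\alpha(z)^{N/2}\Phi_\beta(z)^{N/2}$ (determinant $1$), $t_N=\operatorname{tr}\phi_N$; in a punctured neighborhood of $1$, $r_{1,N}=\frac12(t_N+\sqrt{t_N^2-4})$, $r_{2,N}=\frac12(t_N-\sqrt{t_N^2-4})$ where $\sqrt{t^2-4}=t(1-4/t^2)^{1/2}$ (principal branch, valid for $|t|$ large). *)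

theory Defs
  imports "HOL-Complex_Analysis.Complex_Analysis"
begin

text \<open>2x2 complex matrices, represented as complex^2^2 (rows indexed by 1,2).\<close>
definition mat2 :: "complex \<Rightarrow> complex \<Rightarrow> complex \<Rightarrow> complex \<Rightarrow> complex^2^2" where
  "mat2 a b c d = (\<chi> i j. if i = 1 then (if j = 1 then a else b) else (if j = 1 then c else d))"

primrec mpow :: "complex^2^2 \<Rightarrow> nat \<Rightarrow> complex^2^2" where
  "mpow A 0 = mat 1"
| "mpow A (Suc n) = A ** mpow A n"

definition phi1 :: "real \<Rightarrow> complex \<Rightarrow> complex^2^2" where
  "phi1 e z = mat2 1 (complex_of_real e ^ 2 * inverse z) (inverse (complex_of_real e ^ 2)) 1"

definition phi2 :: "real \<Rightarrow> complex \<Rightarrow> complex^2^2" where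
  "phi2 e z = (\<chi> i j. (1 / (1 - inverse z)) * (phi1 e z) $ i $ j)"

definition phi3 :: "complex \<Rightarrow> complex^2^2" where
  "phi3 z = mat2 1 (inverse z) 1 1"

definition phi4 :: "complex \<Rightarrow> complex^2^2" where
  "phi4 z = (\<chi> i j. (1 / (1 - inverse z)) * (phi3 z) $ i $ j)"

definition Phi :: "real \<Rightarrow> complex \<Rightarrow> complex^2^2" where
  "Phi e z = phi1 e z ** phi2 e z ** phi3 z ** phi4 z"

definition phiN :: "real \<Rightarrow> real \<Rightarrow> nat \<Rightarrow> complex \<Rightarrow> complex^2^2" where
  "phiN a b N z = mpow (Phi a z) (N div 2) ** mpow (Phi b z) (N div 2)"

definition tN :: "real \<Rightarrow> real \<Rightarrow> nat \<Rightarrow> complex \<Rightarrow> complex" where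
  "tN a b N z = trace (phiN a b N z)"

text \<open>sqrt(t^2-4) := t * (1 - 4/t^2)^(1/2), principal branch (csqrt).\<close>
definition r1N :: "real \<Rightarrow> real \<Rightarrow> nat \<Rightarrow> complex \<Rightarrow> complex" where
  "r1N a b N z = (tN a b N z + tN a b N z * csqrt (1 - 4 / (tN a b N z)^2)) / 2"

definition r2N :: "real \<Rightarrow> real \<Rightarrow> nat \<Rightarrow> complex \<Rightarrow> complex" where
  "r2N a b N z = (tN a b N z - tN a b N z * csqrt (1 - 4 / (tN a b N z)^2)) / 2"

end

theory Submission
  imports Defs "HOL-Library.Complex_Order"
begin

(* With c = z / (z - 1), the factors phi2 and phi4 are c times phi1 and phi3, so
   Phi e = c^2 Psi e with Psi e regular at z = 1, and t_N = g / (z - 1)^(2N) where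
   g = z^(2N) tr (Psi_alpha^(N/2) Psi_beta^(N/2)) is holomorphic near 1.
   At z = 1 every entry of phi1 and phi3 is a positive real, hence g 1 is a positive real and
   t_N has a pole of order exactly 2N. Near 1 the radicand 1 - 4 / t_N^2 = 1 - 4 (z - 1)^(4N) / g^2
   is holomorphic and close to 1, so its principal square root is holomorphic; then
   r1 = t_N (1 + sqrt) / 2 keeps the pole of order 2N, and r2 = 1 / r1 has a zero of order 2N. *)

unbundle no fps_syntax

definition scale_mat :: "'a::times \<Rightarrow> 'a^'n^'m \<Rightarrow> 'a^'n^'m" where
  "scale_mat c M = (\<chi> i j. c * M $ i $ j)"

lemma scale_mat_nth [simp]: "scale_mat c M $ i $ j = c * M $ i $ j"
  by (simp add: scale_mat_def)

lemma scale_mat_scale_mat [simp]: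
  fixes M :: "'a::semigroup_mult^'n^'m"
  shows "scale_mat a (scale_mat b M) = scale_mat (a * b) M"
  by (simp add: vec_eq_iff mult.assoc)

lemma scale_mat_one [simp]:
  fixes M :: "'a::monoid_mult^'n^'m"
  shows "scale_mat 1 M = M"
  by (simp add: vec_eq_iff)

lemma matrix_mul_scale_mat_left [simp]:
  fixes A :: "'a::comm_semiring_1^'n^'m"
  shows "scale_mat c A ** B = scale_mat c (A ** B)"
  by (simp add: vec_eq_iff matrix_matrix_mult_def sum_distrib_left mult.assoc)

lemma matrix_mul_scale_mat_right [simp]:
  fixes A :: "'a::comm_semiring_1^'n^'m"
  shows "A ** scale_mat c B = scale_mat c (A ** B)"
  by (simp add: vec_eq_iff matrix_matrix_mult_def sum_distrib_left mult.left_commute)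

lemma trace_scale_mat: "trace (scale_mat c A) = c * trace A"
  by (simp add: trace_def sum_distrib_left)

lemma mpow_scale_mat: "mpow (scale_mat c A) k = scale_mat (c ^ k) (mpow A k)"
  by (induction k) (simp_all add: mult.commute)

definition matrix_holomorphic_on :: "(complex \<Rightarrow> complex^'n^'m) \<Rightarrow> complex set \<Rightarrow> bool" where
  "matrix_holomorphic_on M S \<longleftrightarrow> (\<forall>i j. (\<lambda>z. M z $ i $ j) holomorphic_on S)"

lemma matrix_holomorphic_on_mult:
  "matrix_holomorphic_on A S \<Longrightarrow> matrix_holomorphic_on B S \<Longrightarrow> matrix_holomorphic_on (\<lambda>z. A z ** B z) S"
  unfolding matrix_holomorphic_on_def matrix_matrix_mult_def by (auto intro!: holomorphic_intros)

lemma matrix_holomorphic_on_mpow: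
  assumes "matrix_holomorphic_on A S"
  shows "matrix_holomorphic_on (\<lambda>z. mpow (A z) k) S"
proof (induction k)
  case 0
  show ?case
    by (simp add: matrix_holomorphic_on_def mat_def)
next
  case (Suc k)
  show ?case
    using matrix_holomorphic_on_mult[OF assms Suc.IH] by simp
qed

lemma matrix_holomorphic_on_mat2:
  assumes "a holomorphic_on S" "b holomorphic_on S" "c holomorphic_on S" "d holomorphic_on S"
  shows "matrix_holomorphic_on (\<lambda>z. mat2 (a z) (b z) (c z) (d z)) S"
  unfolding matrix_holomorphic_on_def mat2_def
proof (intro allI)
  fix i j :: 2
  show "(\<lambda>z. (\<chi> i j. if i = 1 then if j = 1 then a z else b z else if j = 1 then c z else d z) $ i $ j)
    holomorphic_on S"
    using assms by (cases "i = 1"; cases "j = 1") simp_all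
qed

lemma holomorphic_on_trace:
  "matrix_holomorphic_on A S \<Longrightarrow> (\<lambda>z. trace (A z)) holomorphic_on S"
  unfolding matrix_holomorphic_on_def trace_def by (auto intro!: holomorphic_intros)

(* The order on complex is that of HOL-Library.Complex_Order: 0 < x means that x is a positive real. *)
definition positive_matrix :: "complex^'n^'m \<Rightarrow> bool" where
  "positive_matrix M \<longleftrightarrow> (\<forall>i j. 0 < M $ i $ j)"

lemma complex_mult_pos: "0 < a \<Longrightarrow> 0 < b \<Longrightarrow> 0 < a * (b :: complex)"
  by (simp add: less_complex_def)

lemma positive_matrix_mult:
  "positive_matrix A \<Longrightarrow> positive_matrix B \<Longrightarrow> positive_matrix (A ** B)"
  unfolding positive_matrix_def matrix_matrix_mult_def by (auto intro!: sum_pos complex_mult_pos)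

lemma positive_matrix_mpow: "positive_matrix A \<Longrightarrow> positive_matrix (mpow A (Suc k))"
  by (induction k) (simp_all add: positive_matrix_mult)

lemma trace_pos: "positive_matrix A \<Longrightarrow> 0 < trace A"
  unfolding positive_matrix_def trace_def by (auto intro: sum_pos)

lemma positive_matrix_mat2: "0 < a \<Longrightarrow> 0 < b \<Longrightarrow> 0 < c \<Longrightarrow> 0 < d \<Longrightarrow> positive_matrix (mat2 a b c d)"
  unfolding positive_matrix_def mat2_def by simp

lemma one_plus_csqrt_nonzero: "1 + csqrt w \<noteq> 0"
proof -
  have "Re (1 + csqrt w) > 0"
    using Re_csqrt[of w] by (simp only: plus_complex.sel one_complex.sel)
  then show ?thesis
    by (metis less_irrefl zero_complex.sel(1))
qed

lemma small_root_eq_inverse_large_root: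
  fixes t s :: complex
  assumes "t \<noteq> 0" "1 + s \<noteq> 0" "s\<^sup>2 = 1 - 4 / t\<^sup>2"
  shows "(t - t * s) / 2 = 2 / (t * (1 + s))"
proof -
  have "(t - t * s) / 2 * (t * (1 + s)) = t\<^sup>2 * (1 - s\<^sup>2) / 2"
    by (simp add: algebra_simps power2_eq_square)
  also have "\<dots> = 2"
    using assms by (simp add: field_simps)
  finally show ?thesis
    using assms by (simp add: eq_divide_eq)
qed

lemma quadratic_roots_at_pole_form:
  fixes g w :: complex and m :: nat
  assumes "g \<noteq> 0" "w \<noteq> 0"
  defines "t \<equiv> g / w ^ m" and "s \<equiv> csqrt (1 - 4 * w ^ (2 * m) / g\<^sup>2)"
  shows "(t + t * csqrt (1 - 4 / t\<^sup>2)) / 2 = g * (1 + s) / 2 / w ^ m"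
    and "(t - t * csqrt (1 - 4 / t\<^sup>2)) / 2 = 2 / (g * (1 + s)) * w ^ m"
proof -
  have radicand: "1 - 4 / t\<^sup>2 = 1 - 4 * w ^ (2 * m) / g\<^sup>2"
    using assms(1,2) by (simp add: t_def power_divide field_simps flip: power_mult)
  then show "(t + t * csqrt (1 - 4 / t\<^sup>2)) / 2 = g * (1 + s) / 2 / w ^ m"
    using assms(2) unfolding radicand s_def[symmetric] by (simp add: t_def field_simps)
  have "(t - t * s) / 2 = 2 / (t * (1 + s))"
    using assms(1,2) one_plus_csqrt_nonzero radicand
    by (intro small_root_eq_inverse_large_root) (simp_all add: t_def s_def)
  then show "(t - t * csqrt (1 - 4 / t\<^sup>2)) / 2 = 2 / (g * (1 + s)) * w ^ m"
    using assms(2) unfolding radicand s_def[symmetric] by (simp add: t_def)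
qed

lemma holomorphic_on_csqrt_near:
  assumes "open S" "a \<in> S" "u holomorphic_on S" "Re (u a) > 0"
  obtains T where "open T" "a \<in> T" "T \<subseteq> S" "(\<lambda>z. csqrt (u z)) holomorphic_on T"
proof
  define T where "T = S \<inter> u -` {w. Re w > 0}"
  show "open T"
    unfolding T_def using assms(1,3) open_halfspace_Re_gt
    by (intro continuous_open_preimage holomorphic_on_imp_continuous_on)
  show "a \<in> T" "T \<subseteq> S"
    using assms(2,4) by (auto simp: T_def)
  have "u z \<notin> \<real>\<^sub>\<le>\<^sub>0" if "z \<in> T" for z
    using that by (auto simp: T_def complex_nonpos_Reals_iff)
  then show "(\<lambda>z. csqrt (u z)) holomorphic_on T"
    using holomorphic_on_subset[OF assms(3) \<open>T \<subseteq> S\<close>] by (intro holomorphic_on_csqrt')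
qed

lemma eigenvalues_near_pole_of_trace:
  fixes g t :: "complex \<Rightarrow> complex"
  assumes S: "open S" "a \<in> S" and g: "g holomorphic_on S" "g a \<noteq> 0" and "m > 0"
    and t: "\<And>z. z \<in> S \<Longrightarrow> z \<noteq> a \<Longrightarrow> t z = g z / (z - a) ^ m"
  obtains T h1 h2 where "open T" "a \<in> T" "h1 holomorphic_on T" "h2 holomorphic_on T"
    "\<And>z. z \<in> T \<Longrightarrow> h1 z \<noteq> 0 \<and> h2 z \<noteq> 0"
    "\<And>z. z \<in> T \<Longrightarrow> z \<noteq> a \<Longrightarrow> (t z + t z * csqrt (1 - 4 / (t z)\<^sup>2)) / 2 = h1 z / (z - a) ^ m"
    "\<And>z. z \<in> T \<Longrightarrow> z \<noteq> a \<Longrightarrow> (t z - t z * csqrt (1 - 4 / (t z)\<^sup>2)) / 2 = h2 z * (z - a) ^ m"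
proof -
  define S' where "S' = S \<inter> g -` (- {0})"
  have S': "open S'" "a \<in> S'" "g holomorphic_on S'"
    using S g continuous_open_preimage[OF holomorphic_on_imp_continuous_on[OF g(1)] S(1), of "- {0}"]
    by (auto simp: S'_def intro: holomorphic_on_subset)
  define u where "u z = 1 - 4 * (z - a) ^ (2 * m) / (g z)\<^sup>2" for z
  have "u holomorphic_on S'"
    unfolding u_def using S'(3) by (auto simp: S'_def intro!: holomorphic_intros)
  moreover have "Re (u a) > 0"
    using \<open>m > 0\<close> by (simp add: u_def zero_power)
  ultimately obtain T where T: "open T" "a \<in> T" "T \<subseteq> S'"
    and sqrt_u: "(\<lambda>z. csqrt (u z)) holomorphic_on T"
    using holomorphic_on_csqrt_near[OF S'(1,2)] by blast
  define s where "s = (\<lambda>z. csqrt (u z))"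
  define h1 where "h1 z = g z * (1 + s z) / 2" for z
  define h2 where "h2 z = 2 / (g z * (1 + s z))" for z
  have g_T: "g holomorphic_on T" "\<And>z. z \<in> T \<Longrightarrow> g z \<noteq> 0"
    using S'(3) T(3) by (auto simp: S'_def intro: holomorphic_on_subset)
  have s: "s holomorphic_on T" "\<And>z. 1 + s z \<noteq> 0"
    using sqrt_u one_plus_csqrt_nonzero by (simp_all add: s_def)
  have "h1 holomorphic_on T" "h2 holomorphic_on T"
    unfolding h1_def h2_def using g_T s by (auto intro!: holomorphic_intros)
  moreover have "h1 z \<noteq> 0 \<and> h2 z \<noteq> 0" if "z \<in> T" for z
    using g_T(2)[OF that] s(2) by (simp add: h1_def h2_def)
  moreover have "(t z + t z * csqrt (1 - 4 / (t z)\<^sup>2)) / 2 = h1 z / (z - a) ^ m"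
    and "(t z - t z * csqrt (1 - 4 / (t z)\<^sup>2)) / 2 = h2 z * (z - a) ^ m"
    if "z \<in> T" "z \<noteq> a" for z
    using quadratic_roots_at_pole_form[of "g z" "z - a" m] t[of z] g_T(2)[OF that(1)] that T(3)
    by (simp_all add: h1_def h2_def s_def u_def S'_def subset_iff)
  ultimately show ?thesis
    using T(1,2) that by blast
qed

lemma pole_of_order_by_factorization:
  assumes "open S" "a \<in> S" "h holomorphic_on S" "h a \<noteq> 0" "m > 0"
    and f: "\<And>z. z \<in> S \<Longrightarrow> z \<noteq> a \<Longrightarrow> f z = h z / (z - a) ^ m"
  shows "is_pole f a \<and> zorder f a = - int m"
proof
  have "\<forall>\<^sub>F z in at a. h z / (z - a) ^ m = f z"
    unfolding eventually_at_topological using assms(1,2) f by metis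
  then show "is_pole f a"
    using is_pole_basic[OF assms(3,1,2,4,5)] is_pole_transform by blast
  show "zorder f a = - int m"
    using assms(1-4)
    by (rule zorder_eqI) (simp add: f power_int_minus divide_inverse)
qed

lemma zero_of_order_by_factorization:
  assumes "open S" "a \<in> S" "h holomorphic_on S" "\<And>z. z \<in> S \<Longrightarrow> h z \<noteq> 0"
    and f: "\<And>z. z \<in> S \<Longrightarrow> z \<noteq> a \<Longrightarrow> f z = h z * (z - a) ^ m"
  shows "isolated_singularity_at f a \<and> not_essential f a \<and> (\<exists>\<^sub>F z in at a. f z \<noteq> 0)
    \<and> zorder f a = int m"
proof (intro conjI)
  define F where "F z = h z * (z - a) ^ m" for z
  have F: "F holomorphic_on S"
    unfolding F_def using assms(3) by (auto intro!: holomorphic_intros)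
  have eq: "\<forall>\<^sub>F z in at a. F z = f z"
    unfolding eventually_at_topological F_def using assms(1,2) f by metis
  show "isolated_singularity_at f a"
    using isolated_singularity_at_holomorphic[OF holomorphic_on_subset[OF F] assms(1,2)] eq
      isolated_singularity_at_transform by blast
  show "not_essential f a"
    using not_essential_holomorphic[OF F assms(2,1)] eq not_essential_transform by blast
  have "\<forall>\<^sub>F z in at a. f z \<noteq> 0"
    unfolding eventually_at_topological
  proof (intro exI[of _ S] conjI ballI impI)
    fix z
    assume "z \<in> S" "z \<noteq> a"
    then show "f z \<noteq> 0"
      using assms(4) by (simp add: f)
  qed (use assms(1,2) in auto)
  then show "\<exists>\<^sub>F z in at a. f z \<noteq> 0"
    by (simp add: eventually_frequently)
  show "zorder f a = int m"
    using assms(1-3) assms(4)[OF assms(2)]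
    by (rule zorder_eqI) (simp add: f power_int_of_nat)
qed

definition Psi :: "real \<Rightarrow> complex \<Rightarrow> complex^2^2" where
  "Psi e z = phi1 e z ** phi1 e z ** phi3 z ** phi3 z"

lemma Phi_eq_scale_mat_Psi: "Phi e z = scale_mat ((1 / (1 - inverse z))\<^sup>2) (Psi e z)"
proof -
  have "phi2 e z = scale_mat (1 / (1 - inverse z)) (phi1 e z)"
    and "phi4 z = scale_mat (1 / (1 - inverse z)) (phi3 z)"
    by (simp_all add: phi2_def phi4_def scale_mat_def)
  then show ?thesis
    by (simp add: Phi_def Psi_def power2_eq_square)
qed

lemma tN_eq_Psi:
  assumes "even N" "z \<noteq> 0" "z \<noteq> 1"
  shows "tN a b N z
    = z ^ (2 * N) * trace (mpow (Psi a z) (N div 2) ** mpow (Psi b z) (N div 2)) / (z - 1) ^ (2 * N)"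
proof -
  have "1 / (1 - inverse z) = z / (z - 1)"
    using assms(2,3) by (simp add: field_simps)
  moreover have "((w :: complex)\<^sup>2) ^ (N div 2) * (w\<^sup>2) ^ (N div 2) = w ^ (2 * N)" for w
  proof -
    have "2 * (N div 2) + 2 * (N div 2) = 2 * N"
      using assms(1) by auto
    then show ?thesis
      by (metis power_add power_mult)
  qed
  ultimately show ?thesis
    by (simp add: tN_def phiN_def Phi_eq_scale_mat_Psi mpow_scale_mat trace_scale_mat power_divide)
qed

lemma matrix_holomorphic_on_Psi: "matrix_holomorphic_on (Psi e) (- {0})"
  unfolding Psi_def phi1_def phi3_def
  by (intro matrix_holomorphic_on_mult matrix_holomorphic_on_mat2) (auto intro!: holomorphic_intros)

lemma positive_matrix_Psi_1: "e \<noteq> 0 \<Longrightarrow> positive_matrix (Psi e 1)"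
  unfolding Psi_def phi1_def phi3_def
  by (intro positive_matrix_mult positive_matrix_mat2) (simp_all add: less_complex_def)

lemma tN_pole_factorization:
  assumes "\<alpha> \<noteq> 0" "\<beta> \<noteq> 0" "even N" "N \<ge> 2"
  obtains g where "g holomorphic_on - {0}" "g 1 \<noteq> 0"
    "\<And>z. z \<in> - {0} \<Longrightarrow> z \<noteq> 1 \<Longrightarrow> tN \<alpha> \<beta> N z = g z / (z - 1) ^ (2 * N)"
proof
  define g where
    "g z = z ^ (2 * N) * trace (mpow (Psi \<alpha> z) (N div 2) ** mpow (Psi \<beta> z) (N div 2))" for z
  show "g holomorphic_on - {0}"
    unfolding g_def using matrix_holomorphic_on_Psi
    by (intro holomorphic_intros holomorphic_on_trace matrix_holomorphic_on_mult matrix_holomorphic_on_mpow)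
  obtain k where k: "N div 2 = Suc k"
    using assms(4) by (metis Suc_pred div_greater_zero_iff zero_less_numeral)
  have "0 < trace (mpow (Psi \<alpha> 1) (N div 2) ** mpow (Psi \<beta> 1) (N div 2))"
    unfolding k using assms(1,2)
    by (intro trace_pos positive_matrix_mult positive_matrix_mpow positive_matrix_Psi_1)
  then show "g 1 \<noteq> 0"
    by (simp add: g_def)
  show "tN \<alpha> \<beta> N z = g z / (z - 1) ^ (2 * N)" if "z \<in> - {0}" "z \<noteq> 1" for z
    using tN_eq_Psi[OF assms(3)] that by (simp add: g_def)
qed

theorem lemma3p3:
  fixes \<alpha> \<beta> :: real and N :: nat
  assumes "0 < \<alpha>" "\<alpha> < 1" "0 < \<beta>" "\<beta> < 1"
    and "even N" "N \<ge> 2"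
  shows "is_pole (r1N \<alpha> \<beta> N) 1 \<and> zorder (r1N \<alpha> \<beta> N) 1 = - int (2 * N)
       \<and> isolated_singularity_at (r2N \<alpha> \<beta> N) 1 \<and> not_essential (r2N \<alpha> \<beta> N) 1
       \<and> (\<exists>\<^sub>F z in at 1. r2N \<alpha> \<beta> N z \<noteq> 0)
       \<and> zorder (r2N \<alpha> \<beta> N) 1 = int (2 * N)"
proof -
  obtain g where g: "g holomorphic_on - {0}" "g 1 \<noteq> 0"
    and trace_eq: "\<And>z. z \<in> - {0} \<Longrightarrow> z \<noteq> 1 \<Longrightarrow> tN \<alpha> \<beta> N z = g z / (z - 1) ^ (2 * N)"
    using tN_pole_factorization[of \<alpha> \<beta> N] assms by auto
  obtain T h1 h2 where T: "open T" "1 \<in> T" "h1 holomorphic_on T" "h2 holomorphic_on T"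
    "\<And>z. z \<in> T \<Longrightarrow> h1 z \<noteq> 0 \<and> h2 z \<noteq> 0"
    and r1: "\<And>z. z \<in> T \<Longrightarrow> z \<noteq> 1 \<Longrightarrow> r1N \<alpha> \<beta> N z = h1 z / (z - 1) ^ (2 * N)"
    and r2: "\<And>z. z \<in> T \<Longrightarrow> z \<noteq> 1 \<Longrightarrow> r2N \<alpha> \<beta> N z = h2 z * (z - 1) ^ (2 * N)"
    unfolding r1N_def r2N_def
    by (rule eigenvalues_near_pole_of_trace[OF _ _ g _ trace_eq]) (use assms(6) in auto)
  have "is_pole (r1N \<alpha> \<beta> N) 1 \<and> zorder (r1N \<alpha> \<beta> N) 1 = - int (2 * N)"
    using T(5)[OF T(2)] assms(6) r1 by (intro pole_of_order_by_factorization[OF T(1-3)]) auto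
  moreover have "isolated_singularity_at (r2N \<alpha> \<beta> N) 1 \<and> not_essential (r2N \<alpha> \<beta> N) 1
       \<and> (\<exists>\<^sub>F z in at 1. r2N \<alpha> \<beta> N z \<noteq> 0) \<and> zorder (r2N \<alpha> \<beta> N) 1 = int (2 * N)"
    using T(5) r2 by (intro zero_of_order_by_factorization[OF T(1,2,4)]) auto
  ultimately show ?thesis
    by blast
qed

end
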